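(* Consider the weighted stochastic block model: there are $r$ latent communities labelled $1,\ldots,r$; each node $i$ is independently assigned a latent community $Z_i$ with $\mathbb{P}(Z_i=z)=p_z>0$ for $z=1,\ldots,r$; each unordered pair of distinct nodes $i\neq j$ carries a real-valued edge weight $X_{i,j}=X_{j,i}$, where, conditional on the community indicators, the edge weights are independent and $X_{i,j}$ has distribution function $F_{z_1,z_2}(x)=\mathbb{P}(X_{i,j}\le x\mid Z_i=z_1,Z_j=z_2)$. For a positive integer $q$ define, for distinct nodes $i,i_1,\ldots,i_q$, $$F_z^q(x_1,\ldots,x_q):=\mathbb{P}(X_{i,i_1}\le x_1,\ X_{i_1,i_2}\le x_2,\ \ldots,\ X_{i_1,i_q}\le x_q\mid Z_i=z),\qquad z=1,\ldots,r.$$ Suppose there exists a finite integer $q$ such that the functions $F_1^q,\ldots,F_r^q$ are linearly independent, and let $q_{\min}$ be the smallest such integer. If $q_{\min}$ is positive, then the weighted stochastic block model (the number of communities $r$, the community distribution $\boldsymbol{p}=(p_1,\ldots,p_r)'$, and the conditional distributions $F_{z_1,z_2}$) is nonparametrically identified from the distribution of the edge weights, up to relabeling of the latent communities.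
   Context: "Nonparametrically identified up to relabeling" means that any two weighted stochastic block models satisfying the assumptions and inducing the same joint distribution of observed edge weights (on sufficiently many nodes) have the same $r$ and have $(\boldsymbol{p},\{F_{z_1,z_2}\})$ equal up to a single permutation of the community labels, with no parametric restrictions imposed on the $F_{z_1,z_2}$. *)

theory Defs
  imports "HOL-Probability.Probability"
begin

definition wsbm_model :: "nat \<Rightarrow> (nat \<Rightarrow> real) \<Rightarrow> (nat \<Rightarrow> nat \<Rightarrow> real measure) \<Rightarrow> bool" where
  "wsbm_model r p F \<longleftrightarrow>
     r \<ge> 1 \<and> (\<forall>z\<in>{1..r}. p z > 0) \<and> (\<Sum>z=1..r. p z) = 1 \<and>
     (\<forall>a\<in>{1..r}. \<forall>b\<in>{1..r}. real_distribution (F a b) \<and> F a b = F b a)"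

text \<open>Probability, for nodes 0..n-1, of the event that every edge (i,j) in E
has weight X_ij \<le> t (i,j) and the community vector satisfies Zc: obtained by summing
over all community assignments z of the nodes (i.i.d. with law p) the conditional
(independent) edge probabilities.\<close>

definition wsbm_event_prob ::
  "nat \<Rightarrow> (nat \<Rightarrow> real) \<Rightarrow> (nat \<Rightarrow> nat \<Rightarrow> real measure) \<Rightarrow> nat \<Rightarrow> (nat \<times> nat) set
    \<Rightarrow> (nat \<times> nat \<Rightarrow> real) \<Rightarrow> ((nat \<Rightarrow> nat) \<Rightarrow> bool) \<Rightarrow> real" where
  "wsbm_event_prob r p F n E t Zc =
     (\<Sum>z\<in>{..<n} \<rightarrow>\<^sub>E {1..r}.
        (\<Prod>i<n. p (z i)) * (if Zc z then 1 else 0) *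
        (\<Prod>e\<in>E. cdf (F (z (fst e)) (z (snd e))) (t e)))"

definition all_pairs :: "nat \<Rightarrow> (nat \<times> nat) set" where
  "all_pairs n = {(i, j). i < j \<and> j < n}"

definition wsbm_joint_cdf ::
  "nat \<Rightarrow> (nat \<Rightarrow> real) \<Rightarrow> (nat \<Rightarrow> nat \<Rightarrow> real measure) \<Rightarrow> nat \<Rightarrow> (nat \<times> nat \<Rightarrow> real) \<Rightarrow> real" where
  "wsbm_joint_cdf r p F n t = wsbm_event_prob r p F n (all_pairs n) t (\<lambda>_. True)"

text \<open>Edges used in F_z^q with nodes i = 0, i_1 = 1, ..., i_q = q:
(i,i_1), (i_1,i_2), ..., (i_1,i_q).\<close>
definition star_edges :: "nat \<Rightarrow> (nat \<times> nat) set" where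
  "star_edges q = {(a, b). (a = 0 \<and> b = 1 \<and> 1 \<le> q) \<or> (a = 1 \<and> 2 \<le> b \<and> b \<le> q)}"

text \<open>F_z^q(x_1,...,x_q) = P(X_{i,i_1} \<le> x_1, X_{i_1,i_2} \<le> x_2, ..., X_{i_1,i_q} \<le> x_q | Z_i = z);
the argument x is read only at coordinates 1..q.\<close>
definition Fq ::
  "nat \<Rightarrow> (nat \<Rightarrow> real) \<Rightarrow> (nat \<Rightarrow> nat \<Rightarrow> real measure) \<Rightarrow> nat \<Rightarrow> nat \<Rightarrow> (nat \<Rightarrow> real) \<Rightarrow> real" where
  "Fq r p F q z x =
     wsbm_event_prob r p F (q + 1) (star_edges q) (\<lambda>e. x (snd e)) (\<lambda>zz. zz 0 = z) / p z"

definition Fq_lin_indep :: "nat \<Rightarrow> (nat \<Rightarrow> real) \<Rightarrow> (nat \<Rightarrow> nat \<Rightarrow> real measure) \<Rightarrow> nat \<Rightarrow> bool" where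
  "Fq_lin_indep r p F q \<longleftrightarrow>
     (\<forall>c :: nat \<Rightarrow> real. (\<forall>x. (\<Sum>z=1..r. c z * Fq r p F q z x) = 0) \<longrightarrow> (\<forall>z\<in>{1..r}. c z = 0))"

definition wsbm_assumptions :: "nat \<Rightarrow> (nat \<Rightarrow> real) \<Rightarrow> (nat \<Rightarrow> nat \<Rightarrow> real measure) \<Rightarrow> bool" where
  "wsbm_assumptions r p F \<longleftrightarrow>
     wsbm_model r p F \<and> (\<exists>q. Fq_lin_indep r p F q) \<and> (LEAST q. Fq_lin_indep r p F q) > 0"

end

theory Submission
  imports Defs
begin

text \<open>Sending all other thresholds to infinity, the joint distribution function determines the
  probability of the event that X e \<le> t e for all e in any finite set E of node pairs. For m copies
  of the star defining F_z^Q that share the conditioning node this probability is the mixture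
  moment \<Sum>z p_z \<Prod>j F_z^Q(x_j); for an edge whose two end nodes each carry such a star it is
  \<Sum>a b p_a p_b F_{a,b}(s) F_a^Q(x) F_b^Q(y). Once F_1^Q, ..., F_r^Q are linearly independent (Q the
  larger of the two minimal orders, linear independence being monotone in Q), the second and third
  moments determine r, p and the F_z^Q up to a permutation by an argument of Kruskal type with dual
  functionals, and comparing coefficients in the edge identity then identifies the F_{a,b}.\<close>

section \<open>Linear independence of real functions\<close>

definition lin_indep_on :: "'i set \<Rightarrow> ('i \<Rightarrow> 'd \<Rightarrow> real) \<Rightarrow> bool" where
  "lin_indep_on I f \<longleftrightarrow> (\<forall>c. (\<forall>x. (\<Sum>i\<in>I. c i * f i x) = 0) \<longrightarrow> (\<forall>i\<in>I. c i = 0))"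

definition linear_functional :: "(('d \<Rightarrow> real) \<Rightarrow> real) \<Rightarrow> bool" where
  "linear_functional L \<longleftrightarrow> (\<forall>h k \<alpha> \<beta>. L (\<lambda>x. \<alpha> * h x + \<beta> * k x) = \<alpha> * L h + \<beta> * L k)"

lemma linear_functional_sum:
  assumes "linear_functional L" "finite I"
  shows "L (\<lambda>x. \<Sum>i\<in>I. c i * h i x) = (\<Sum>i\<in>I. c i * L (h i))"
  using assms(2)
proof (induction I rule: finite_induct)
  case empty
  show ?case
    using assms(1)[unfolded linear_functional_def, rule_format, where h = "\<lambda>x. 0" and k = "\<lambda>x. 0" and \<alpha> = 0 and \<beta> = 0]
    by simp
next
  case (insert a I)
  then show ?case
    using assms(1)[unfolded linear_functional_def, rule_format,
        where h = "h a" and k = "\<lambda>x. \<Sum>i\<in>I. c i * h i x" and \<alpha> = "c a" and \<beta> = 1]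
    by simp
qed

lemma lin_indep_onD:
  assumes "lin_indep_on I f" "\<And>x. (\<Sum>i\<in>I. c i * f i x) = 0" "i \<in> I"
  shows "c i = 0"
proof -
  from assms(1) have "(\<forall>x. (\<Sum>i\<in>I. c i * f i x) = 0) \<longrightarrow> (\<forall>i\<in>I. c i = 0)"
    unfolding lin_indep_on_def by (rule spec[where x = c])
  with assms(2,3) show ?thesis
    by blast
qed

lemma lin_indep_on_coeffs_unique:
  assumes "lin_indep_on I f" "finite I" "\<And>x. (\<Sum>i\<in>I. c i * f i x) = (\<Sum>i\<in>I. d i * f i x)" "i \<in> I"
  shows "c i = d i"
proof -
  have "(\<Sum>i\<in>I. (c i - d i) * f i x) = 0" for x
    using assms(3)[of x] by (simp add: left_diff_distrib sum_subtractf)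
  then show ?thesis
    using lin_indep_onD[OF assms(1) _ assms(4), of "\<lambda>i. c i - d i"] by simp
qed

lemma lin_indep_on_subset:
  assumes "lin_indep_on I f" "J \<subseteq> I" "finite I"
  shows "lin_indep_on J f"
  unfolding lin_indep_on_def
proof (intro allI impI ballI)
  fix c i assume c: "\<forall>x. (\<Sum>j\<in>J. c j * f j x) = 0" and "i \<in> J"
  have "(\<Sum>j\<in>I. (if j \<in> J then c j else 0) * f j x) = 0" for x
  proof -
    have "(\<Sum>j\<in>I. (if j \<in> J then c j else 0) * f j x) = (\<Sum>j\<in>J. (if j \<in> J then c j else 0) * f j x)"
      by (rule sum.mono_neutral_right) (use assms(2,3) in auto)
    also have "\<dots> = (\<Sum>j\<in>J. c j * f j x)"
      by (intro sum.cong) auto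
    finally show ?thesis
      using c by simp
  qed
  moreover have "i \<in> I"
    using \<open>i \<in> J\<close> assms(2) by blast
  ultimately show "c i = 0"
    using lin_indep_onD[OF assms(1), of "\<lambda>j. if j \<in> J then c j else 0" i] \<open>i \<in> J\<close> by simp
qed

lemma lin_indep_on_scale_zero:
  assumes "lin_indep_on I f" "finite I" "i \<in> I" "\<And>x. \<alpha> * f i x = 0"
  shows "\<alpha> = 0"
proof -
  have "(\<Sum>j\<in>I. (if j = i then \<alpha> else 0) * f j x) = 0" for x
    using assms(2-4) by (simp add: if_distrib[of "\<lambda>a. a * _"] sum.If_cases)
  from lin_indep_onD[OF assms(1) this assms(3)] show ?thesis
    by simp
qed

lemma lin_indep_on_nonzero:
  assumes "lin_indep_on I f" "finite I" "i \<in> I"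
  shows "f i \<noteq> (\<lambda>x. 0)"
  using lin_indep_on_scale_zero[OF assms, of 1] by auto

lemma lin_indep_on_inj_on:
  assumes "lin_indep_on I f" "finite I"
  shows "inj_on f I"
proof (rule inj_onI, rule ccontr)
  fix i j assume ij: "i \<in> I" "j \<in> I" "f i = f j" "i \<noteq> j"
  then have "lin_indep_on {i, j} f"
    using lin_indep_on_subset[OF assms(1) _ assms(2)] by simp
  moreover have "(\<Sum>k\<in>{i, j}. (if k = i then 1 else -1) * f k x) = 0" for x
    using ij by simp
  ultimately show False
    using lin_indep_onD[of "{i, j}" f "\<lambda>k. if k = i then 1 else -1" i] by simp
qed

lemma lin_indep_on_separating_functional:
  assumes indep: "lin_indep_on (insert a J) f" and "finite J" "a \<notin> J"
    and \<psi>_lin: "\<forall>i\<in>J. linear_functional (\<psi> i)"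
    and \<psi>_dual: "\<forall>i\<in>J. \<forall>j\<in>J. \<psi> i (f j) = (if i = j then 1 else 0)"
  shows "\<exists>\<theta>. linear_functional \<theta> \<and> \<theta> (f a) = 1 \<and> (\<forall>j\<in>J. \<theta> (f j) = 0)"
proof -
  define h where "h x = f a x - (\<Sum>b\<in>J. \<psi> b (f a) * f b x)" for x
  have "\<exists>y. h y \<noteq> 0"
  proof (rule ccontr)
    assume "\<nexists>y. h y \<noteq> 0"
    moreover have "(\<Sum>i\<in>J. (if i = a then 1 else - \<psi> i (f a)) * f i x) = - (\<Sum>b\<in>J. \<psi> b (f a) * f b x)" for x
      using \<open>a \<notin> J\<close> by (auto simp: sum_negf[symmetric] intro!: sum.cong)
    ultimately have "(\<Sum>i\<in>insert a J. (if i = a then 1 else - \<psi> i (f a)) * f i x) = 0" for x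
      using \<open>finite J\<close> \<open>a \<notin> J\<close> by (simp add: h_def)
    from lin_indep_onD[OF indep this, of a] show False
      by simp
  qed
  then obtain y where y: "h y \<noteq> 0" ..
  \<comment> \<open>\<theta> evaluates at y the residual of the projection onto the span of the f b, b \<in> J.\<close>
  define \<theta> where "\<theta> k = (k y - (\<Sum>b\<in>J. \<psi> b k * f b y)) / h y" for k
  have "linear_functional \<theta>"
    unfolding linear_functional_def
  proof (intro allI)
    fix k1 k2 :: "'b \<Rightarrow> real" and \<alpha> \<beta> :: real
    have "(\<Sum>b\<in>J. \<psi> b (\<lambda>x. \<alpha> * k1 x + \<beta> * k2 x) * f b y)
        = \<alpha> * (\<Sum>b\<in>J. \<psi> b k1 * f b y) + \<beta> * (\<Sum>b\<in>J. \<psi> b k2 * f b y)"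
      using \<psi>_lin by (simp add: linear_functional_def sum.distrib sum_distrib_left algebra_simps)
    then show "\<theta> (\<lambda>x. \<alpha> * k1 x + \<beta> * k2 x) = \<alpha> * \<theta> k1 + \<beta> * \<theta> k2"
      unfolding \<theta>_def using y by (simp add: field_simps)
  qed
  moreover have "\<theta> (f a) = 1"
    using y by (simp add: \<theta>_def h_def)
  moreover have "\<theta> (f j) = 0" if "j \<in> J" for j
  proof -
    have "(\<Sum>b\<in>J. \<psi> b (f j) * f b y) = f j y"
      using \<psi>_dual that \<open>finite J\<close> by (simp add: if_distrib[of "\<lambda>a. a * _"] sum.If_cases)
    then show ?thesis
      by (simp add: \<theta>_def)
  qed
  ultimately show ?thesis
    by blast
qed

lemma lin_indep_on_dual_functionals:
  assumes "lin_indep_on I f" "finite I"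
  shows "\<exists>\<phi>. (\<forall>i\<in>I. linear_functional (\<phi> i)) \<and> (\<forall>i\<in>I. \<forall>j\<in>I. \<phi> i (f j) = (if i = j then 1 else 0))"
  using assms(2,1)
proof (induction I rule: finite_induct)
  case empty
  then show ?case by simp
next
  case (insert a J)
  obtain \<psi> where \<psi>_lin: "\<forall>i\<in>J. linear_functional (\<psi> i)"
    and \<psi>_dual: "\<forall>i\<in>J. \<forall>j\<in>J. \<psi> i (f j) = (if i = j then 1 else 0)"
    using insert.IH[OF lin_indep_on_subset[OF insert.prems]] insert.hyps(1) by blast
  obtain \<theta> where \<theta>_lin: "linear_functional \<theta>" and \<theta>_a: "\<theta> (f a) = 1" and \<theta>_J: "\<forall>j\<in>J. \<theta> (f j) = 0"
    using lin_indep_on_separating_functional[OF insert.prems insert.hyps(1,2) \<psi>_lin \<psi>_dual] by blast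
  define \<phi> where "\<phi> i = (if i = a then \<theta> else (\<lambda>k. \<psi> i k - \<psi> i (f a) * \<theta> k))" for i
  have "linear_functional (\<phi> i)" if "i \<in> insert a J" for i
    using that \<theta>_lin \<psi>_lin unfolding \<phi>_def linear_functional_def by (auto simp: algebra_simps)
  moreover have "\<phi> i (f j) = (if i = j then 1 else 0)" if "i \<in> insert a J" "j \<in> insert a J" for i j
    using that insert.hyps(2) \<psi>_dual \<theta>_J \<theta>_a by (auto simp: \<phi>_def)
  ultimately show ?case
    by blast
qed

lemma lin_indep_on_coeff_in_span:
  assumes "lin_indep_on J g" "finite I" "finite J"
    and expand: "\<And>i x. i \<in> I \<Longrightarrow> f i x = (\<Sum>j\<in>J. \<nu> i j * g j x)"
    and eq: "\<And>x. (\<Sum>i\<in>I. A i * f i x) = (\<Sum>j\<in>J. B j * g j x)"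
    and "j \<in> J"
  shows "B j = (\<Sum>i\<in>I. A i * \<nu> i j)"
proof (rule sym, rule lin_indep_on_coeffs_unique[OF assms(1,3) _ assms(6)])
  fix x
  have "(\<Sum>j\<in>J. B j * g j x) = (\<Sum>i\<in>I. \<Sum>j\<in>J. A i * \<nu> i j * g j x)"
    using expand by (simp add: eq[symmetric] sum_distrib_left mult.assoc)
  also have "\<dots> = (\<Sum>j\<in>J. \<Sum>i\<in>I. A i * \<nu> i j * g j x)"
    by (rule sum.swap)
  finally show "(\<Sum>j\<in>J. (\<Sum>i\<in>I. A i * \<nu> i j) * g j x) = (\<Sum>j\<in>J. B j * g j x)"
    by (simp add: sum_distrib_right)
qed

lemma span_of_second_moments:
  assumes "lin_indep_on I f" "finite I" "finite J" "\<forall>i\<in>I. p i \<noteq> 0"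
    and M2: "\<And>x y. (\<Sum>i\<in>I. p i * (f i x * f i y)) = (\<Sum>j\<in>J. q j * (g j x * g j y))"
  shows "\<exists>\<nu>. \<forall>i\<in>I. \<forall>x. f i x = (\<Sum>j\<in>J. \<nu> i j * g j x)"
proof -
  obtain \<phi> where \<phi>_lin: "\<forall>i\<in>I. linear_functional (\<phi> i)"
    and \<phi>_dual: "\<forall>i\<in>I. \<forall>k\<in>I. \<phi> i (f k) = (if i = k then 1 else 0)"
    using lin_indep_on_dual_functionals[OF assms(1,2)] by blast
  have "f i x = (\<Sum>j\<in>J. (q j * \<phi> i (g j) / p i) * g j x)" if i: "i \<in> I" for i x
  proof -
    have lin: "linear_functional (\<phi> i)"
      using \<phi>_lin i by blast
    have "(\<Sum>k\<in>I. (p k * f k x) * \<phi> i (f k)) = \<phi> i (\<lambda>y. \<Sum>k\<in>I. (p k * f k x) * f k y)"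
      by (rule linear_functional_sum[OF lin assms(2), symmetric])
    also have "\<dots> = \<phi> i (\<lambda>y. \<Sum>j\<in>J. (q j * g j x) * g j y)"
      using M2 by (simp add: mult.assoc)
    also have "\<dots> = (\<Sum>j\<in>J. (q j * g j x) * \<phi> i (g j))"
      by (rule linear_functional_sum[OF lin assms(3)])
    finally have "p i * f i x = (\<Sum>j\<in>J. (q j * \<phi> i (g j)) * g j x)"
      using \<phi>_dual i assms(2) by (simp add: if_distrib[of "\<lambda>a. _ * a"] sum.If_cases mult_ac)
    then show ?thesis
      using assms(4) i by (simp add: sum_divide_distrib[symmetric] field_simps)
  qed
  then show ?thesis
    by (intro exI[of _ "\<lambda>i j. q j * \<phi> i (g j) / p i"]) blast
qed

lemma mixture_moments_coeffs:
  assumes fin: "finite I" "finite J" and indep: "lin_indep_on I f" "lin_indep_on J g"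
    and "\<forall>i\<in>I. p i \<noteq> 0" and \<nu>: "\<forall>i\<in>I. \<forall>x. f i x = (\<Sum>j\<in>J. \<nu> i j * g j x)"
    and M2: "\<And>x y. (\<Sum>i\<in>I. p i * (f i x * f i y)) = (\<Sum>j\<in>J. q j * (g j x * g j y))"
    and M3: "\<And>x y w. (\<Sum>i\<in>I. p i * (f i x * f i y * f i w)) = (\<Sum>j\<in>J. q j * (g j x * g j y * g j w))"
  shows "\<And>j x. j \<in> J \<Longrightarrow> q j * g j x = (\<Sum>i\<in>I. p i * \<nu> i j * f i x)"
    and "\<And>i j k. i \<in> I \<Longrightarrow> j \<in> J \<Longrightarrow> k \<in> J \<Longrightarrow> \<nu> i j * \<nu> i k = (if j = k then \<nu> i j else 0)"
proof -
  have expand: "\<And>i x. i \<in> I \<Longrightarrow> f i x = (\<Sum>j\<in>J. \<nu> i j * g j x)"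
    using \<nu> by blast
  show P2: "q j * g j x = (\<Sum>i\<in>I. p i * \<nu> i j * f i x)" if "j \<in> J" for j x
    using lin_indep_on_coeff_in_span[OF indep(2) fin expand, where A = "\<lambda>i. p i * f i x" and B = "\<lambda>j. q j * g j x"]
      M2[of x] that by (simp add: mult_ac)
  have P3: "(\<Sum>i\<in>I. p i * \<nu> i j * \<nu> i k * f i x) = (if j = k then q j * g j x else 0)"
    if "j \<in> J" "k \<in> J" for j k x
  proof -
    have "q k * g k x * g k y = (\<Sum>i\<in>I. (p i * \<nu> i k * f i x) * f i y)" for y
      using lin_indep_on_coeff_in_span[OF indep(2) fin expand,
          where A = "\<lambda>i. p i * f i x * f i y" and B = "\<lambda>j. q j * g j x * g j y"] M3[of x y] that(2)
      by (simp add: mult_ac)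
    then have "(\<Sum>i\<in>I. (p i * \<nu> i k * f i x) * f i y) = (\<Sum>j\<in>J. (if j = k then q k * g k x else 0) * g j y)" for y
      using that(2) fin(2) by (simp add: if_distrib[of "\<lambda>a. a * _"] sum.If_cases)
    from lin_indep_on_coeff_in_span[OF indep(2) fin expand this that(1)] show ?thesis
      by (cases "j = k") (simp_all add: mult_ac)
  qed
  show "\<nu> i j * \<nu> i k = (if j = k then \<nu> i j else 0)" if "i \<in> I" "j \<in> J" "k \<in> J" for i j k
  proof -
    have "(\<Sum>i\<in>I. (p i * (\<nu> i j * \<nu> i k)) * f i x) = (\<Sum>i\<in>I. (p i * (if j = k then \<nu> i j else 0)) * f i x)" for x
      using P3[OF that(2,3), of x] P2[OF that(2), of x] by (cases "j = k") (simp_all add: mult_ac)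
    from lin_indep_on_coeffs_unique[OF indep(1) fin(1) this that(1)] show ?thesis
      using assms(5) that(1) by simp
  qed
qed

lemma orthogonal_idempotent_rows_indicator:
  fixes \<nu> :: "'i \<Rightarrow> 'j \<Rightarrow> real"
  assumes prod: "\<And>i j k. i \<in> I \<Longrightarrow> j \<in> J \<Longrightarrow> k \<in> J \<Longrightarrow> \<nu> i j * \<nu> i k = (if j = k then \<nu> i j else 0)"
    and nonzero: "\<And>i. i \<in> I \<Longrightarrow> \<exists>s\<in>J. \<nu> i s \<noteq> 0"
  shows "\<exists>\<sigma>. \<forall>i\<in>I. \<sigma> i \<in> J \<and> (\<forall>j\<in>J. \<nu> i j = (if j = \<sigma> i then 1 else 0))"
proof -
  have "\<forall>i\<in>I. \<exists>s. s \<in> J \<and> \<nu> i s \<noteq> 0"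
    using nonzero by blast
  from bchoice[OF this] obtain \<sigma> where \<sigma>: "\<forall>i\<in>I. \<sigma> i \<in> J \<and> \<nu> i (\<sigma> i) \<noteq> 0"
    by blast
  have "\<nu> i j = (if j = \<sigma> i then 1 else 0)" if "i \<in> I" "j \<in> J" for i j
  proof (cases "j = \<sigma> i")
    case True
    then show ?thesis
      using prod[OF that(1) that(2) that(2)] \<sigma> that(1) by simp
  next
    case False
    then show ?thesis
      using prod[OF that \<sigma>[rule_format, OF that(1), THEN conjunct1]] \<sigma> that(1) by simp
  qed
  with \<sigma> show ?thesis
    by blast
qed

lemma mixture_identified_by_indicator_coeffs:
  assumes fin: "finite I" "finite J" and indep: "lin_indep_on I f" "lin_indep_on J g"
    and pos: "\<forall>j\<in>J. q j > 0" and \<sigma>: "\<forall>i\<in>I. \<sigma> i \<in> J \<and> g (\<sigma> i) = f i"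
    and P2: "\<And>j x. j \<in> J \<Longrightarrow> q j * g j x = (\<Sum>i\<in>I. if \<sigma> i = j then p i * f i x else 0)"
  shows "bij_betw \<sigma> I J \<and> (\<forall>i\<in>I. q (\<sigma> i) = p i)"
proof -
  have inj: "inj_on \<sigma> I"
  proof (rule inj_onI)
    fix i k assume ik: "i \<in> I" "k \<in> I" "\<sigma> i = \<sigma> k"
    then have "f i = f k"
      using \<sigma> by metis
    from inj_onD[OF lin_indep_on_inj_on[OF indep(1) fin(1)] this ik(1,2)] show "i = k" .
  qed
  have "J \<subseteq> \<sigma> ` I"
  proof
    fix j assume "j \<in> J"
    show "j \<in> \<sigma> ` I"
    proof (rule ccontr)
      assume "j \<notin> \<sigma> ` I"
      then have "(\<Sum>i\<in>I. if \<sigma> i = j then p i * f i x else 0) = 0" for x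
        by (intro sum.neutral) auto
      then have "q j * g j x = 0" for x
        using P2[OF \<open>j \<in> J\<close>] by simp
      then have "q j = 0"
        by (rule lin_indep_on_scale_zero[OF indep(2) fin(2) \<open>j \<in> J\<close>])
      then show False
        using pos \<open>j \<in> J\<close> by auto
    qed
  qed
  moreover have "\<sigma> ` I \<subseteq> J"
    using \<sigma> by auto
  moreover have "q (\<sigma> i) = p i" if "i \<in> I" for i
  proof -
    have "(\<Sum>k\<in>I. if \<sigma> k = \<sigma> i then p k * f k x else 0) = (\<Sum>k\<in>I. if k = i then p k * f k x else 0)" for x
      using inj that by (intro sum.cong) (auto simp: inj_on_eq_iff)
    then have "(q (\<sigma> i) - p i) * g (\<sigma> i) x = 0" for x
      using P2[of "\<sigma> i" x] \<sigma> that fin(1) by (simp add: left_diff_distrib)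
    then have "q (\<sigma> i) - p i = 0"
      using lin_indep_on_scale_zero[OF indep(2) fin(2)] \<sigma> that by blast
    then show ?thesis
      by simp
  qed
  ultimately show ?thesis
    using inj unfolding bij_betw_def by blast
qed

text \<open>Expanding every f i in the g j (possible by the second moments), the third moments force
  the coefficient matrix to be a 0-1 matrix with exactly one 1 in each row.\<close>
lemma mixture_identified_by_moments:
  fixes f :: "'i \<Rightarrow> 'd \<Rightarrow> real" and g :: "'j \<Rightarrow> 'd \<Rightarrow> real"
  assumes fin: "finite I" "finite J" and indep: "lin_indep_on I f" "lin_indep_on J g"
    and pos: "\<forall>i\<in>I. p i > 0" "\<forall>j\<in>J. q j > 0"
    and M2: "\<And>x y. (\<Sum>i\<in>I. p i * (f i x * f i y)) = (\<Sum>j\<in>J. q j * (g j x * g j y))"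
    and M3: "\<And>x y w. (\<Sum>i\<in>I. p i * (f i x * f i y * f i w)) = (\<Sum>j\<in>J. q j * (g j x * g j y * g j w))"
  shows "\<exists>\<sigma>. bij_betw \<sigma> I J \<and> (\<forall>i\<in>I. g (\<sigma> i) = f i \<and> q (\<sigma> i) = p i)"
proof -
  have p_nonzero: "\<forall>i\<in>I. p i \<noteq> 0"
    using pos(1) by auto
  then obtain \<nu> where \<nu>: "\<forall>i\<in>I. \<forall>x. f i x = (\<Sum>j\<in>J. \<nu> i j * g j x)"
    using span_of_second_moments[OF indep(1) fin _ M2] by blast
  then have expand: "\<And>i x. i \<in> I \<Longrightarrow> f i x = (\<Sum>j\<in>J. \<nu> i j * g j x)"
    by blast
  note P2 = mixture_moments_coeffs(1)[OF fin indep p_nonzero \<nu> M2 M3]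
  note \<nu>_prod = mixture_moments_coeffs(2)[OF fin indep p_nonzero \<nu> M2 M3]
  have nonzero: "\<exists>s\<in>J. \<nu> i s \<noteq> 0" if "i \<in> I" for i
  proof (rule ccontr)
    assume "\<not> (\<exists>s\<in>J. \<nu> i s \<noteq> 0)"
    then have "f i = (\<lambda>x. 0)"
      using expand[OF that] by auto
    then show False
      using lin_indep_on_nonzero[OF indep(1) fin(1) that] by simp
  qed
  from orthogonal_idempotent_rows_indicator[OF \<nu>_prod nonzero]
  obtain \<sigma> where \<sigma>_ind: "\<forall>i\<in>I. \<sigma> i \<in> J \<and> (\<forall>j\<in>J. \<nu> i j = (if j = \<sigma> i then 1 else 0))" ..
  have \<sigma>: "\<sigma> i \<in> J" if "i \<in> I" for i
    using \<sigma>_ind that by blast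
  have \<nu>_indicator: "\<nu> i j = (if j = \<sigma> i then 1 else 0)" if "i \<in> I" "j \<in> J" for i j
    using \<sigma>_ind that by blast
  have "\<forall>i\<in>I. \<sigma> i \<in> J \<and> g (\<sigma> i) = f i"
  proof
    fix i assume "i \<in> I"
    have "f i x = (\<Sum>j\<in>J. if j = \<sigma> i then g j x else 0)" for x
      unfolding expand[OF \<open>i \<in> I\<close>] by (intro sum.cong) (simp_all add: \<nu>_indicator[OF \<open>i \<in> I\<close>])
    then show "\<sigma> i \<in> J \<and> g (\<sigma> i) = f i"
      using \<sigma> \<open>i \<in> I\<close> fin(2) by auto
  qed
  moreover have "q j * g j x = (\<Sum>i\<in>I. if \<sigma> i = j then p i * f i x else 0)" if "j \<in> J" for j x
    unfolding P2[OF that] by (intro sum.cong) (simp_all add: \<nu>_indicator that)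
  ultimately have "bij_betw \<sigma> I J \<and> (\<forall>i\<in>I. q (\<sigma> i) = p i)"
    by (rule mixture_identified_by_indicator_coeffs[OF fin indep pos(2)])
  with \<open>\<forall>i\<in>I. \<sigma> i \<in> J \<and> g (\<sigma> i) = f i\<close> show ?thesis
    by blast
qed

lemma lin_indep_on_bilinear_coeffs_unique:
  assumes "lin_indep_on I f" "finite I"
    and "\<And>x y. (\<Sum>i\<in>I. \<Sum>j\<in>I. K i j * (f i x * f j y)) = (\<Sum>i\<in>I. \<Sum>j\<in>I. K' i j * (f i x * f j y))"
    and "i \<in> I" "j \<in> I"
  shows "K i j = K' i j"
proof -
  have "(\<Sum>j\<in>I. K i j * f j y) = (\<Sum>j\<in>I. K' i j * f j y)" for y
  proof (rule lin_indep_on_coeffs_unique[OF assms(1,2) _ assms(4)])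
    show "(\<Sum>i\<in>I. (\<Sum>j\<in>I. K i j * f j y) * f i x) = (\<Sum>i\<in>I. (\<Sum>j\<in>I. K' i j * f j y) * f i x)" for x
      using assms(3)[of x y] by (simp add: sum_distrib_left sum_distrib_right mult_ac)
  qed
  then show ?thesis
    by (rule lin_indep_on_coeffs_unique[OF assms(1,2) _ assms(5)])
qed

lemma bilinear_mixture_coeffs_identified:
  fixes f :: "'i \<Rightarrow> 'd \<Rightarrow> real" and g :: "'j \<Rightarrow> 'd \<Rightarrow> real"
  assumes "lin_indep_on I f" "finite I" "bij_betw \<sigma> I J" "\<forall>i\<in>I. p i \<noteq> 0"
    and \<sigma>: "\<forall>i\<in>I. g (\<sigma> i) = f i \<and> q (\<sigma> i) = p i"
    and eq: "\<And>x y. (\<Sum>a\<in>I. p a * (\<Sum>b\<in>I. p b * (K a b * (f a x * f b y))))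
      = (\<Sum>a\<in>J. q a * (\<Sum>b\<in>J. q b * (K' a b * (g a x * g b y))))"
    and "a \<in> I" "b \<in> I"
  shows "K a b = K' (\<sigma> a) (\<sigma> b)"
proof -
  have "(\<Sum>a\<in>J. q a * (\<Sum>b\<in>J. q b * (K' a b * (g a x * g b y))))
      = (\<Sum>a\<in>I. p a * (\<Sum>b\<in>I. p b * (K' (\<sigma> a) (\<sigma> b) * (f a x * f b y))))" for x y
    using \<sigma> by (simp add: sum.reindex_bij_betw[OF assms(3), symmetric])
  then have "(\<Sum>a\<in>I. \<Sum>b\<in>I. (p a * p b * K a b) * (f a x * f b y))
      = (\<Sum>a\<in>I. \<Sum>b\<in>I. (p a * p b * K' (\<sigma> a) (\<sigma> b)) * (f a x * f b y))" for x y
    using eq[of x y] by (simp add: sum_distrib_left mult_ac)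
  then have "p a * p b * K a b = p a * p b * K' (\<sigma> a) (\<sigma> b)"
    by (rule lin_indep_on_bilinear_coeffs_unique[OF assms(1,2) _ assms(7,8)])
  then show ?thesis
    using assms(4,7,8) by simp
qed

section \<open>Conditional edge probabilities\<close>

lemma sum_PiE_insert:
  assumes "a \<notin> N"
  shows "(\<Sum>z\<in>insert a N \<rightarrow>\<^sub>E S. G z) = (\<Sum>s\<in>S. \<Sum>z\<in>N \<rightarrow>\<^sub>E S. G (z(a := s)))"
proof -
  have "(\<Sum>z\<in>insert a N \<rightarrow>\<^sub>E S. G z) = (\<Sum>(s, z)\<in>S \<times> (N \<rightarrow>\<^sub>E S). G (z(a := s)))"
    unfolding PiE_insert_eq
    by (subst sum.reindex) (use inj_combinator[OF assms, of "\<lambda>_. S"] in \<open>auto simp: case_prod_beta\<close>)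
  then show ?thesis
    by (simp add: sum.cartesian_product)
qed

lemma fst_snd_in_Field: "e \<in> E \<Longrightarrow> fst e \<in> Field E \<and> snd e \<in> Field E"
  by (cases e) (auto intro: FieldI1 FieldI2)

lemma finite_star_edges: "finite (star_edges Q)"
  by (rule finite_subset[of _ "{..Q} \<times> {..Q}"]) (auto simp: star_edges_def)

lemma Field_star_edges: "Field (star_edges Q) \<subseteq> {..Q}"
  by (auto simp: star_edges_def Field_def Domain_fst Range_snd)

lemma finite_all_pairs: "finite (all_pairs n)"
  by (rule finite_subset[of _ "{..<n} \<times> {..<n}"]) (auto simp: all_pairs_def)

lemma Field_all_pairs: "Field (all_pairs n) \<subseteq> {..<n}"
  by (auto simp: all_pairs_def Field_def)

context
  fixes r :: nat and p :: "nat \<Rightarrow> real" and F :: "nat \<Rightarrow> nat \<Rightarrow> real measure"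
begin

definition edge_cdf_prod :: "(nat \<times> nat) set \<Rightarrow> (nat \<times> nat \<Rightarrow> real) \<Rightarrow> (nat \<Rightarrow> nat) \<Rightarrow> real" where
  "edge_cdf_prod E t z = (\<Prod>e\<in>E. cdf (F (z (fst e)) (z (snd e))) (t e))"

text \<open>The probability that X e \<le> t e for all e \<in> E when each node i outside N has community u i
  and the communities of the nodes in N are drawn independently from p.\<close>
definition cond_edge_prob :: "nat set \<Rightarrow> (nat \<times> nat) set \<Rightarrow> (nat \<times> nat \<Rightarrow> real) \<Rightarrow> (nat \<Rightarrow> nat) \<Rightarrow> real" where
  "cond_edge_prob N E t u =
     (\<Sum>z\<in>N \<rightarrow>\<^sub>E {1..r}. (\<Prod>i\<in>N. p (z i)) * edge_cdf_prod E t (override_on u z N))"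

lemma edge_cdf_prod_cong:
  assumes "\<And>i. i \<in> Field E \<Longrightarrow> z i = z' i"
  shows "edge_cdf_prod E t z = edge_cdf_prod E t z'"
  unfolding edge_cdf_prod_def using assms by (intro prod.cong) (auto simp: Field_def Domain_fst Range_snd)

lemma cond_edge_prob_empty [simp]: "cond_edge_prob {} E t u = edge_cdf_prod E t u"
  by (simp add: cond_edge_prob_def)

lemma cond_edge_prob_insert:
  assumes "a \<notin> N" "finite N"
  shows "cond_edge_prob (insert a N) E t u = (\<Sum>s\<in>{1..r}. p s * cond_edge_prob N E t (u(a := s)))"
proof -
  have "(\<Prod>i\<in>insert a N. p ((z(a := s)) i)) * edge_cdf_prod E t (override_on u (z(a := s)) (insert a N))
      = p s * ((\<Prod>i\<in>N. p (z i)) * edge_cdf_prod E t (override_on (u(a := s)) z N))" for s z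
  proof -
    have "(\<Prod>i\<in>N. p ((z(a := s)) i)) = (\<Prod>i\<in>N. p (z i))"
      using assms(1) by (intro prod.cong) auto
    moreover have "override_on u (z(a := s)) (insert a N) = override_on (u(a := s)) z N"
      using assms(1) by (auto simp: override_on_def)
    ultimately show ?thesis
      using assms by simp
  qed
  then show ?thesis
    unfolding cond_edge_prob_def sum_PiE_insert[OF assms(1)] by (simp add: sum_distrib_left)
qed

lemma cond_edge_prob_cong:
  assumes "\<And>i. i \<in> Field E \<Longrightarrow> i \<notin> N \<Longrightarrow> u i = u' i"
  shows "cond_edge_prob N E t u = cond_edge_prob N E t u'"
  unfolding cond_edge_prob_def using assms
  by (intro sum.cong refl arg_cong2[where f = "(*)"] edge_cdf_prod_cong) (auto simp: override_on_def)

lemma cond_edge_prob_no_edges: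
  assumes "finite N" "(\<Sum>s=1..r. p s) = 1"
  shows "cond_edge_prob N {} t u = 1"
  using assms(1) by (induction N arbitrary: u rule: finite_induct)
    (use assms(2) in \<open>simp_all add: edge_cdf_prod_def cond_edge_prob_insert\<close>)

lemma cond_edge_prob_Un:
  assumes "finite N1" "finite N2" "finite E1" "finite E2" "N1 \<inter> N2 = {}" "E1 \<inter> E2 = {}"
    and "Field E1 \<inter> N2 = {}" "Field E2 \<inter> N1 = {}"
  shows "cond_edge_prob (N1 \<union> N2) (E1 \<union> E2) t u = cond_edge_prob N1 E1 t u * cond_edge_prob N2 E2 t u"
  using assms
proof (induction N1 arbitrary: u rule: finite_induct)
  case empty
  have "edge_cdf_prod (E1 \<union> E2) t (override_on u z N2) = edge_cdf_prod E1 t u * edge_cdf_prod E2 t (override_on u z N2)" for z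
  proof -
    have "edge_cdf_prod E1 t (override_on u z N2) = edge_cdf_prod E1 t u"
      using empty.prems by (intro edge_cdf_prod_cong) (auto simp: override_on_def)
    then show ?thesis
      using empty.prems by (simp add: edge_cdf_prod_def prod.union_disjoint)
  qed
  then show ?case
    by (simp add: cond_edge_prob_def sum_distrib_left mult_ac)
next
  case (insert a N1)
  have "cond_edge_prob N2 E2 t (u(a := s)) = cond_edge_prob N2 E2 t u" for s
    using insert by (intro cond_edge_prob_cong) auto
  then show ?case
    using insert by (simp add: cond_edge_prob_insert sum_distrib_left mult_ac)
qed

lemma cond_edge_prob_reindex:
  assumes "inj \<pi>" "finite N"
    and "\<And>e. e \<in> E \<Longrightarrow> t' (map_prod \<pi> \<pi> e) = t e"
    and "\<And>i. i \<in> Field E \<Longrightarrow> i \<notin> N \<Longrightarrow> u' (\<pi> i) = u i"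
  shows "cond_edge_prob (\<pi> ` N) (map_prod \<pi> \<pi> ` E) t' u' = cond_edge_prob N E t u"
  using assms(2,4)
proof (induction N arbitrary: u u' rule: finite_induct)
  case empty
  have "inj_on (map_prod \<pi> \<pi>) E"
    using assms(1) by (auto intro: inj_on_subset[OF prod.inj_map])
  then show ?case
    unfolding image_empty cond_edge_prob_empty edge_cdf_prod_def prod.reindex[OF \<open>inj_on _ E\<close>]
    by (intro prod.cong refl) (auto simp: assms(3) empty.prems fst_snd_in_Field)
next
  case (insert a N)
  have "\<pi> a \<notin> \<pi> ` N"
    using insert.hyps(2) assms(1) by (auto dest: injD)
  moreover have "cond_edge_prob (\<pi> ` N) (map_prod \<pi> \<pi> ` E) t' (u'(\<pi> a := s)) = cond_edge_prob N E t (u(a := s))" for s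
  proof (rule insert.IH)
    show "(u'(\<pi> a := s)) (\<pi> i) = (u(a := s)) i" if "i \<in> Field E" "i \<notin> N" for i
      using insert.prems[OF that(1)] that(2) assms(1) by (cases "i = a") (auto dest: injD)
  qed
  ultimately show ?case
    using insert.hyps by (simp add: cond_edge_prob_insert)
qed

lemma cond_edge_prob_tendsto_subset:
  assumes "finite E" "E' \<subseteq> E" and distr: "\<forall>a\<in>{1..r}. \<forall>b\<in>{1..r}. real_distribution (F a b)"
    and u: "\<And>i. i \<in> Field E \<Longrightarrow> i \<notin> N \<Longrightarrow> u i \<in> {1..r}"
  shows "(\<lambda>m. cond_edge_prob N E (\<lambda>e. if e \<in> E' then t e else real m) u) \<longlonglongrightarrow> cond_edge_prob N E' t u"
  unfolding cond_edge_prob_def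
proof (intro tendsto_sum tendsto_mult tendsto_const)
  fix z assume z: "z \<in> N \<rightarrow>\<^sub>E {1..r}"
  define w where "w = override_on u z N"
  have "real_distribution (F (w (fst e)) (w (snd e)))" if "e \<in> E" for e
    using that z u distr by (force simp: w_def override_on_def Field_def Domain_fst Range_snd)
  then have "(\<lambda>m. \<Prod>e\<in>E - E'. cdf (F (w (fst e)) (w (snd e))) (real m)) \<longlonglongrightarrow> (\<Prod>e\<in>E - E'. 1)"
    by (intro tendsto_prod real_distribution.cdf_lim_infty_prob) auto
  then have "(\<lambda>m. edge_cdf_prod E' t w * (\<Prod>e\<in>E - E'. cdf (F (w (fst e)) (w (snd e))) (real m)))
      \<longlonglongrightarrow> edge_cdf_prod E' t w"
    using tendsto_mult[OF tendsto_const] by fastforce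
  moreover have "edge_cdf_prod E (\<lambda>e. if e \<in> E' then t e else real m) w
      = edge_cdf_prod E' t w * (\<Prod>e\<in>E - E'. cdf (F (w (fst e)) (w (snd e))) (real m))" for m
    unfolding edge_cdf_prod_def prod.subset_diff[OF assms(2,1)] by (simp add: mult.commute)
  ultimately show "(\<lambda>m. edge_cdf_prod E (\<lambda>e. if e \<in> E' then t e else real m) (override_on u z N))
      \<longlonglongrightarrow> edge_cdf_prod E' t (override_on u z N)"
    unfolding w_def by simp
qed

lemma wsbm_event_prob_eq_cond_edge_prob:
  "wsbm_event_prob r p F n E t (\<lambda>_. True) = cond_edge_prob {..<n} E t (\<lambda>_. undefined)"
proof -
  have "override_on (\<lambda>_. undefined) z {..<n} = z" if "z \<in> {..<n} \<rightarrow>\<^sub>E {1..r}" for z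
    using that by (auto simp: override_on_def PiE_def extensional_def)
  then show ?thesis
    unfolding wsbm_event_prob_def cond_edge_prob_def edge_cdf_prod_def by simp
qed

lemma Fq_eq_cond_edge_prob:
  assumes "c \<in> {1..r}" "p c > 0" "u 0 = c"
  shows "Fq r p F Q c x = cond_edge_prob {1..Q} (star_edges Q) (\<lambda>e. x (snd e)) u"
proof -
  let ?E = "star_edges Q" and ?t = "\<lambda>e. x (snd e)"
  have summand: "(\<Prod>i\<in>insert 0 {1..Q}. p ((z(0 := s)) i)) * (if (z(0 := s)) 0 = c then 1 else 0)
        * (\<Prod>e\<in>?E. cdf (F ((z(0 := s)) (fst e)) ((z(0 := s)) (snd e))) (?t e))
      = (if s = c then p c * ((\<Prod>i\<in>{1..Q}. p (z i)) * edge_cdf_prod ?E ?t (override_on u z {1..Q})) else 0)"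
    for s z
  proof -
    have "(\<Prod>i\<in>{1..Q}. p ((z(0 := s)) i)) = (\<Prod>i\<in>{1..Q}. p (z i))"
      by (intro prod.cong) auto
    moreover have "edge_cdf_prod ?E ?t (z(0 := c)) = edge_cdf_prod ?E ?t (override_on u z {1..Q})"
      using assms(3) by (intro edge_cdf_prod_cong) (auto simp: override_on_def star_edges_def Field_def Domain_fst Range_snd)
    ultimately show ?thesis
      by (cases "s = c") (simp_all add: edge_cdf_prod_def)
  qed
  have nodes: "{..<Q + 1} = insert 0 {1..Q}" and zero_notin: "0 \<notin> {1..Q}"
    by auto
  have "wsbm_event_prob r p F (Q + 1) ?E ?t (\<lambda>z. z 0 = c)
      = (\<Sum>s\<in>{1..r}. \<Sum>z\<in>{1..Q} \<rightarrow>\<^sub>E {1..r}.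
           (if s = c then p c * ((\<Prod>i\<in>{1..Q}. p (z i)) * edge_cdf_prod ?E ?t (override_on u z {1..Q})) else 0))"
    unfolding wsbm_event_prob_def nodes sum_PiE_insert[OF zero_notin] summand ..
  also have "\<dots> = (\<Sum>s\<in>{1..r}. if s = c then p c * cond_edge_prob {1..Q} ?E ?t u else 0)"
    by (intro sum.cong refl) (simp add: cond_edge_prob_def sum_distrib_left)
  also have "\<dots> = p c * cond_edge_prob {1..Q} ?E ?t u"
    using assms(1) by simp
  finally show ?thesis
    unfolding Fq_def using assms(2) by simp
qed

lemma cond_edge_prob_threshold_cong:
  assumes "\<And>e. e \<in> E \<Longrightarrow> t e = t' e"
  shows "cond_edge_prob N E t u = cond_edge_prob N E t' u"
  unfolding cond_edge_prob_def edge_cdf_prod_def using assms by simp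

lemma Fq_tendsto_truncation:
  assumes model: "wsbm_model r p F" and "q \<le> Q" "z \<in> {1..r}"
  shows "(\<lambda>m. Fq r p F Q z (\<lambda>j. if j \<le> q then x j else real m)) \<longlonglongrightarrow> Fq r p F q z x"
proof -
  have pz: "p z > 0" and distr: "\<forall>a\<in>{1..r}. \<forall>b\<in>{1..r}. real_distribution (F a b)"
    and sum_p: "(\<Sum>s=1..r. p s) = 1"
    using model \<open>z \<in> {1..r}\<close> by (auto simp: wsbm_model_def)
  have star_le: "e \<in> star_edges q \<longleftrightarrow> snd e \<le> q" if "e \<in> star_edges Q" for e
    using that \<open>q \<le> Q\<close> by (auto simp: star_edges_def)
  have "Fq r p F Q z (\<lambda>j. if j \<le> q then x j else real m)
      = cond_edge_prob {1..Q} (star_edges Q) (\<lambda>e. if e \<in> star_edges q then x (snd e) else real m) (\<lambda>_. z)" for m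
    unfolding Fq_eq_cond_edge_prob[OF \<open>z \<in> {1..r}\<close> pz refl]
    by (rule cond_edge_prob_threshold_cong) (simp add: star_le)
  moreover have "(\<lambda>m. cond_edge_prob {1..Q} (star_edges Q) (\<lambda>e. if e \<in> star_edges q then x (snd e) else real m) (\<lambda>_. z))
      \<longlonglongrightarrow> cond_edge_prob {1..Q} (star_edges q) (\<lambda>e. x (snd e)) (\<lambda>_. z)"
    using \<open>q \<le> Q\<close> \<open>z \<in> {1..r}\<close>
    by (intro cond_edge_prob_tendsto_subset distr finite_star_edges) (auto simp: star_edges_def)
  moreover have "cond_edge_prob ({1..q} \<union> {q+1..Q}) (star_edges q \<union> {}) (\<lambda>e. x (snd e)) (\<lambda>_. z)
      = cond_edge_prob {1..q} (star_edges q) (\<lambda>e. x (snd e)) (\<lambda>_. z)"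
    using Field_star_edges[of q]
    by (subst cond_edge_prob_Un) (auto simp: finite_star_edges cond_edge_prob_no_edges[OF _ sum_p])
  moreover have "{1..q} \<union> {q+1..Q} = {1..Q}"
    using \<open>q \<le> Q\<close> by auto
  ultimately show ?thesis
    using Fq_eq_cond_edge_prob[OF \<open>z \<in> {1..r}\<close> pz refl] by simp
qed

lemma Fq_lin_indep_mono:
  assumes "wsbm_model r p F" "Fq_lin_indep r p F q" "q \<le> Q"
  shows "Fq_lin_indep r p F Q"
  unfolding Fq_lin_indep_def
proof (intro allI impI)
  fix c :: "nat \<Rightarrow> real"
  assume indep_Q: "\<forall>x. (\<Sum>z=1..r. c z * Fq r p F Q z x) = 0"
  have "(\<Sum>z=1..r. c z * Fq r p F q z x) = 0" for x
  proof -
    have "(\<lambda>m. \<Sum>z=1..r. c z * Fq r p F Q z (\<lambda>j. if j \<le> q then x j else real m))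
        \<longlonglongrightarrow> (\<Sum>z=1..r. c z * Fq r p F q z x)"
      using Fq_tendsto_truncation[OF assms(1,3)] by (intro tendsto_sum tendsto_mult tendsto_const) auto
    then show ?thesis
      using indep_Q by (simp add: LIMSEQ_const_iff)
  qed
  then show "\<forall>z\<in>{1..r}. c z = 0"
    using assms(2) unfolding Fq_lin_indep_def by blast
qed

lemma wsbm_joint_cdf_tendsto_event_prob:
  assumes "wsbm_model r p F" "E \<subseteq> all_pairs n"
  shows "(\<lambda>m. wsbm_joint_cdf r p F n (\<lambda>e. if e \<in> E then t e else real m))
    \<longlonglongrightarrow> wsbm_event_prob r p F n E t (\<lambda>_. True)"
  unfolding wsbm_joint_cdf_def wsbm_event_prob_eq_cond_edge_prob
proof (rule cond_edge_prob_tendsto_subset[OF finite_all_pairs assms(2)])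
  show "\<forall>a\<in>{1..r}. \<forall>b\<in>{1..r}. real_distribution (F a b)"
    using assms(1) by (simp add: wsbm_model_def)
  show "(\<lambda>_. undefined) i \<in> {1..r}" if "i \<in> Field (all_pairs n)" "i \<notin> {..<n}" for i
    using that Field_all_pairs by blast
qed

end

lemma wsbm_event_prob_eq_if_joint_cdf_eq:
  assumes "wsbm_model r p F" "wsbm_model r' p' F'"
    and "\<forall>n t. wsbm_joint_cdf r p F n t = wsbm_joint_cdf r' p' F' n t" and "E \<subseteq> all_pairs n"
  shows "wsbm_event_prob r p F n E t (\<lambda>_. True) = wsbm_event_prob r' p' F' n E t (\<lambda>_. True)"
proof (rule LIMSEQ_unique[OF wsbm_joint_cdf_tendsto_event_prob[OF assms(1,4)]])
  show "(\<lambda>m. wsbm_joint_cdf r p F n (\<lambda>e. if e \<in> E then t e else real m))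
      \<longlonglongrightarrow> wsbm_event_prob r' p' F' n E t (\<lambda>_. True)"
    using wsbm_joint_cdf_tendsto_event_prob[OF assms(2,4)] assms(3) by simp
qed

section \<open>Stars and star forests\<close>

definition star_embedding :: "nat \<Rightarrow> nat \<Rightarrow> nat \<Rightarrow> nat" where
  "star_embedding c b i = (if i = 0 then c else b + i - 1)"

definition placed_star :: "nat \<Rightarrow> nat \<Rightarrow> nat \<Rightarrow> (nat \<times> nat) set" where
  "placed_star Q c b = map_prod (star_embedding c b) (star_embedding c b) ` star_edges Q"

lemma inj_star_embedding: "c < b \<Longrightarrow> inj (star_embedding c b)"
  by (auto intro!: injI simp: star_embedding_def split: if_splits)

lemma star_embedding_image:
  assumes "1 \<le> b"
  shows "star_embedding c b ` {1..Q} = {b..<b + Q}"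
proof (intro equalityI subsetI)
  fix y assume "y \<in> {b..<b + Q}"
  then show "y \<in> star_embedding c b ` {1..Q}"
    using assms by (intro rev_image_eqI[of "y + 1 - b"]) (auto simp: star_embedding_def)
qed (use assms in \<open>auto simp: star_embedding_def\<close>)

lemma placed_star_edge:
  assumes "e \<in> placed_star Q c b" "c < b"
  shows "fst e < snd e" "b \<le> snd e" "snd e < b + Q" "fst e = c \<or> fst e = b"
  using assms by (auto simp: placed_star_def star_embedding_def star_edges_def)

lemma Field_placed_star: "c < b \<Longrightarrow> Field (placed_star Q c b) \<subseteq> insert c {b..<b + Q}"
  using placed_star_edge[of _ Q c b] by (fastforce simp: Field_def Domain_fst Range_snd)

lemma finite_placed_star: "finite (placed_star Q c b)"
  by (simp add: placed_star_def finite_star_edges)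

lemma cond_edge_prob_placed_star:
  assumes "wsbm_model r p F" "c < b" "u c \<in> {1..r}"
    and "\<And>e. e \<in> star_edges Q \<Longrightarrow> t (map_prod (star_embedding c b) (star_embedding c b) e) = x (snd e)"
  shows "cond_edge_prob r p F {b..<b + Q} (placed_star Q c b) t u = Fq r p F Q (u c) x"
proof -
  have "cond_edge_prob r p F (star_embedding c b ` {1..Q}) (placed_star Q c b) t u
      = cond_edge_prob r p F {1..Q} (star_edges Q) (\<lambda>e. x (snd e)) (\<lambda>_. u c)"
    unfolding placed_star_def
  proof (rule cond_edge_prob_reindex[OF inj_star_embedding[OF assms(2)] finite_atLeastAtMost])
    show "t (map_prod (star_embedding c b) (star_embedding c b) e) = x (snd e)" if "e \<in> star_edges Q" for e
      using assms(4)[OF that] .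
    show "u (star_embedding c b i) = u c" if "i \<in> Field (star_edges Q)" "i \<notin> {1..Q}" for i
      using that Field_star_edges[of Q] by (auto simp: star_embedding_def)
  qed
  moreover have "p (u c) > 0"
    using assms(1,3) by (simp add: wsbm_model_def)
  ultimately show ?thesis
    using Fq_eq_cond_edge_prob[OF assms(3)] star_embedding_image[of b c Q] assms(2) by simp
qed

text \<open>Copy j < m of a star is attached to node c j < k and uses the nodes k + j Q, ..., k + j Q + Q - 1;
  forest_threshold Q k X assigns X j to copy j, read at the star coordinates 1..Q.\<close>
definition star_forest :: "nat \<Rightarrow> nat \<Rightarrow> (nat \<Rightarrow> nat) \<Rightarrow> nat \<Rightarrow> (nat \<times> nat) set" where
  "star_forest Q k c m = (\<Union>j<m. placed_star Q (c j) (k + j * Q))"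

definition forest_threshold :: "nat \<Rightarrow> nat \<Rightarrow> (nat \<Rightarrow> nat \<Rightarrow> real) \<Rightarrow> nat \<times> nat \<Rightarrow> real" where
  "forest_threshold Q k X e = X ((snd e - k) div Q) ((snd e - k) mod Q + 1)"

lemma star_forest_edge:
  assumes "e \<in> star_forest Q k c m" "\<forall>j<m. c j < k"
  shows "fst e < snd e" "k \<le> snd e" "snd e < k + m * Q"
proof -
  obtain j where j: "j < m" "e \<in> placed_star Q (c j) (k + j * Q)"
    using assms(1) by (auto simp: star_forest_def)
  have "Suc j * Q \<le> m * Q"
    using j(1) by (intro mult_le_mono1) simp
  moreover have "c j < k + j * Q"
    using assms(2) j(1) by (simp add: trans_less_add1)
  ultimately show "fst e < snd e" "k \<le> snd e" "snd e < k + m * Q"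
    using placed_star_edge[OF j(2)] by fastforce+
qed

lemma star_forest_subset_all_pairs: "\<forall>j<m. c j < k \<Longrightarrow> star_forest Q k c m \<subseteq> all_pairs (k + m * Q)"
  using star_forest_edge[of _ Q k c m] by (force simp: all_pairs_def)

lemma forest_threshold_placed_star:
  assumes "e \<in> star_edges Q"
  shows "forest_threshold Q k X (map_prod (star_embedding c (k + j * Q)) (star_embedding c (k + j * Q)) e) = X j (snd e)"
proof -
  obtain a where a: "snd e = Suc a" "a < Q"
    using assms by (cases "snd e") (auto simp: star_edges_def)
  then have "snd (map_prod (star_embedding c (k + j * Q)) (star_embedding c (k + j * Q)) e) - k = a + j * Q"
    by (cases e) (simp add: star_embedding_def)
  with a show ?thesis
    by (simp add: forest_threshold_def)
qed

lemma star_forest_Suc: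
  "star_forest Q k c (Suc m) = star_forest Q k c m \<union> placed_star Q (c m) (k + m * Q)"
  by (auto simp: star_forest_def lessThan_Suc)

lemma finite_star_forest: "finite (star_forest Q k c m)"
  by (simp add: star_forest_def finite_placed_star)

lemma cond_edge_prob_star_forest:
  assumes "wsbm_model r p F" "\<forall>j<m. c j < k" "\<forall>j<m. u (c j) \<in> {1..r}"
    and "\<And>e. e \<in> star_forest Q k c m \<Longrightarrow> t e = forest_threshold Q k X e"
  shows "cond_edge_prob r p F {k..<k + m * Q} (star_forest Q k c m) t u = (\<Prod>j<m. Fq r p F Q (u (c j)) (X j))"
  using assms(2-4)
proof (induction m)
  case 0
  then show ?case
    by (simp add: star_forest_def edge_cdf_prod_def)
next
  case (Suc m)
  let ?old = "star_forest Q k c m" and ?new = "placed_star Q (c m) (k + m * Q)"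
  have "c m < k + m * Q"
    using Suc.prems(1) by (simp add: trans_less_add1)
  have "cond_edge_prob r p F ({k..<k + m * Q} \<union> {k + m * Q..<k + m * Q + Q}) (?old \<union> ?new) t u
      = cond_edge_prob r p F {k..<k + m * Q} ?old t u * cond_edge_prob r p F {k + m * Q..<k + m * Q + Q} ?new t u"
  proof (rule cond_edge_prob_Un)
    show "?old \<inter> ?new = {}" "Field ?old \<inter> {k + m * Q..<k + m * Q + Q} = {}"
      using star_forest_edge[of _ Q k c m] placed_star_edge[OF _ \<open>c m < k + m * Q\<close>] Suc.prems(1)
      by (fastforce simp: Field_def Domain_fst Range_snd)+
    show "Field ?new \<inter> {k..<k + m * Q} = {}"
      using Field_placed_star[OF \<open>c m < k + m * Q\<close>] Suc.prems(1) by fastforce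
  qed (auto simp: finite_star_forest finite_placed_star)
  moreover have "cond_edge_prob r p F {k + m * Q..<k + m * Q + Q} ?new t u = Fq r p F Q (u (c m)) (X m)"
    using assms(1) \<open>c m < k + m * Q\<close> Suc.prems(2,3) forest_threshold_placed_star
    by (intro cond_edge_prob_placed_star) (auto simp: star_forest_Suc placed_star_def)
  moreover have "{k..<k + m * Q} \<union> {k + m * Q..<k + m * Q + Q} = {k..<k + Suc m * Q}"
    by auto
  ultimately show ?case
    using Suc by (simp add: star_forest_Suc)
qed

lemma wsbm_event_prob_star_forest:
  assumes "wsbm_model r p F"
  shows "wsbm_event_prob r p F (1 + m * Q) (star_forest Q 1 (\<lambda>_. 0) m) (forest_threshold Q 1 X) (\<lambda>_. True)
    = (\<Sum>s\<in>{1..r}. p s * (\<Prod>j<m. Fq r p F Q s (X j)))"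
proof -
  have "{..<1 + m * Q} = insert 0 {1..<1 + m * Q}"
    by auto
  then show ?thesis
    unfolding wsbm_event_prob_eq_cond_edge_prob
    using cond_edge_prob_star_forest[OF assms, of m "\<lambda>_. 0" 1]
    by (simp add: cond_edge_prob_insert)
qed

lemma wsbm_event_prob_edge_star_forest:
  assumes "wsbm_model r p F"
  shows "wsbm_event_prob r p F (2 + 2 * Q) (insert (0, 1) (star_forest Q 2 id 2))
      ((forest_threshold Q 2 X)((0, 1) := s)) (\<lambda>_. True)
    = (\<Sum>a\<in>{1..r}. p a * (\<Sum>b\<in>{1..r}. p b * (cdf (F a b) s * (Fq r p F Q a (X 0) * Fq r p F Q b (X 1)))))"
proof -
  let ?E = "star_forest Q 2 id 2" and ?t = "(forest_threshold Q 2 X)((0, 1) := s)"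
  have "cond_edge_prob r p F ({} \<union> {2..<2 + 2 * Q}) ({(0, 1)} \<union> ?E) ?t w
      = cdf (F (w 0) (w 1)) s * (Fq r p F Q (w 0) (X 0) * Fq r p F Q (w 1) (X 1))"
    if "w 0 \<in> {1..r}" "w 1 \<in> {1..r}" for w
  proof -
    have "(0, 1) \<notin> ?E"
      using star_forest_edge(2)[of "(0, 1)" Q 2 id 2] by auto
    then have "cond_edge_prob r p F {2..<2 + 2 * Q} ?E ?t w = (\<Prod>j<2. Fq r p F Q (w (id j)) (X j))"
      by (intro cond_edge_prob_star_forest[OF assms]) (use that in \<open>auto simp: less_2_cases_iff\<close>)
    then have "cond_edge_prob r p F {2..<2 + 2 * Q} ?E ?t w = Fq r p F Q (w 0) (X 0) * Fq r p F Q (w 1) (X 1)"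
      by (simp add: numeral_2_eq_2)
    moreover have "Field ?E \<inter> {} = {}" "Field {(0::nat, 1::nat)} \<inter> {2..<2 + 2 * Q} = {}" "{(0, 1)} \<inter> ?E = {}"
      using \<open>(0, 1) \<notin> ?E\<close> by (auto simp: Field_def)
    ultimately show ?thesis
      by (subst cond_edge_prob_Un) (auto simp: finite_star_forest edge_cdf_prod_def)
  qed
  moreover have "{..<2 + 2 * Q} = insert 0 (insert 1 ({} \<union> {2..<2 + 2 * Q}))"
    by auto
  ultimately show ?thesis
    unfolding wsbm_event_prob_eq_cond_edge_prob by (simp add: cond_edge_prob_insert)
qed

section \<open>Identification\<close>

lemma Fq_lin_indep_iff: "Fq_lin_indep r p F q \<longleftrightarrow> lin_indep_on {1..r} (Fq r p F q)"
  by (simp add: Fq_lin_indep_def lin_indep_on_def)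

lemma Fq_lin_indep_common_order:
  assumes "wsbm_assumptions r p F" "wsbm_assumptions r' p' F'"
  obtains Q where "lin_indep_on {1..r} (Fq r p F Q)" "lin_indep_on {1..r'} (Fq r' p' F' Q)"
proof
  let ?Q = "max (LEAST q. Fq_lin_indep r p F q) (LEAST q. Fq_lin_indep r' p' F' q)"
  show "lin_indep_on {1..r} (Fq r p F ?Q)"
    using assms(1) unfolding wsbm_assumptions_def Fq_lin_indep_iff[symmetric]
    by (metis Fq_lin_indep_mono LeastI_ex max.cobounded1)
  show "lin_indep_on {1..r'} (Fq r' p' F' ?Q)"
    using assms(2) unfolding wsbm_assumptions_def Fq_lin_indep_iff[symmetric]
    by (metis Fq_lin_indep_mono LeastI_ex max.cobounded2)
qed

lemma star_moments_eq_if_joint_cdf_eq: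
  fixes m :: nat
  assumes model: "wsbm_model r p F" "wsbm_model r' p' F'"
    and joint: "\<forall>n t. wsbm_joint_cdf r p F n t = wsbm_joint_cdf r' p' F' n t"
  shows "(\<Sum>s\<in>{1..r}. p s * (\<Prod>j<m. Fq r p F Q s (X j))) = (\<Sum>s\<in>{1..r'}. p' s * (\<Prod>j<m. Fq r' p' F' Q s (X j)))"
proof -
  have "(\<Sum>s\<in>{1..r}. p s * (\<Prod>j<m. Fq r p F Q s (X j)))
      = wsbm_event_prob r p F (1 + m * Q) (star_forest Q 1 (\<lambda>_. 0) m) (forest_threshold Q 1 X) (\<lambda>_. True)"
    by (rule wsbm_event_prob_star_forest[OF model(1), symmetric])
  also have "\<dots> = wsbm_event_prob r' p' F' (1 + m * Q) (star_forest Q 1 (\<lambda>_. 0) m) (forest_threshold Q 1 X) (\<lambda>_. True)"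
    by (rule wsbm_event_prob_eq_if_joint_cdf_eq[OF model joint star_forest_subset_all_pairs]) simp
  also have "\<dots> = (\<Sum>s\<in>{1..r'}. p' s * (\<Prod>j<m. Fq r' p' F' Q s (X j)))"
    by (rule wsbm_event_prob_star_forest[OF model(2)])
  finally show ?thesis .
qed

lemma edge_moments_eq_if_joint_cdf_eq:
  assumes model: "wsbm_model r p F" "wsbm_model r' p' F'"
    and joint: "\<forall>n t. wsbm_joint_cdf r p F n t = wsbm_joint_cdf r' p' F' n t"
  shows "(\<Sum>a\<in>{1..r}. p a * (\<Sum>b\<in>{1..r}. p b * (cdf (F a b) s * (Fq r p F Q a x * Fq r p F Q b y))))
    = (\<Sum>a\<in>{1..r'}. p' a * (\<Sum>b\<in>{1..r'}. p' b * (cdf (F' a b) s * (Fq r' p' F' Q a x * Fq r' p' F' Q b y))))"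
proof -
  let ?X = "\<lambda>j. if j = 0 then x else y"
  have "star_forest Q 2 id 2 \<subseteq> all_pairs (2 + 2 * Q)"
    by (rule star_forest_subset_all_pairs) simp
  then have "insert (0, 1) (star_forest Q 2 id 2) \<subseteq> all_pairs (2 + 2 * Q)"
    by (simp add: all_pairs_def)
  from wsbm_event_prob_eq_if_joint_cdf_eq[OF model joint this, of "(forest_threshold Q 2 ?X)((0, 1) := s)"]
  show ?thesis
    using wsbm_event_prob_edge_star_forest[OF model(1), where Q = Q and X = ?X and s = s]
      wsbm_event_prob_edge_star_forest[OF model(2), where Q = Q and X = ?X and s = s]
    by simp
qed

lemma edge_distributions_identified:
  assumes model: "wsbm_model r p F" "wsbm_model r' p' F'"
    and joint: "\<forall>n t. wsbm_joint_cdf r p F n t = wsbm_joint_cdf r' p' F' n t"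
    and indep: "lin_indep_on {1..r} (Fq r p F Q)"
    and \<sigma>: "bij_betw \<sigma> {1..r} {1..r'}" "\<forall>z\<in>{1..r}. Fq r' p' F' Q (\<sigma> z) = Fq r p F Q z \<and> p' (\<sigma> z) = p z"
    and "a \<in> {1..r}" "b \<in> {1..r}"
  shows "F' (\<sigma> a) (\<sigma> b) = F a b"
proof -
  have "\<forall>z\<in>{1..r}. p z \<noteq> 0"
    using model(1) unfolding wsbm_model_def by fastforce
  from bilinear_mixture_coeffs_identified[OF indep finite_atLeastAtMost \<sigma>(1) this \<sigma>(2)
      edge_moments_eq_if_joint_cdf_eq[OF model joint] \<open>a \<in> {1..r}\<close> \<open>b \<in> {1..r}\<close>]
  have "cdf (F a b) = cdf (F' (\<sigma> a) (\<sigma> b))"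
    by blast
  moreover have "real_distribution (F a b)" "real_distribution (F' (\<sigma> a) (\<sigma> b))"
    using model \<open>a \<in> {1..r}\<close> \<open>b \<in> {1..r}\<close> bij_betwE[OF \<sigma>(1)] by (auto simp: wsbm_model_def)
  ultimately show ?thesis
    by (metis cdf_unique)
qed

theorem proposition1:
  fixes r r' :: nat and p p' :: "nat \<Rightarrow> real" and F F' :: "nat \<Rightarrow> nat \<Rightarrow> real measure"
  assumes "wsbm_assumptions r p F"
    and "wsbm_assumptions r' p' F'"
    and "\<forall>n t. wsbm_joint_cdf r p F n t = wsbm_joint_cdf r' p' F' n t"
  shows "r = r' \<and>
    (\<exists>\<sigma>. bij_betw \<sigma> {1..r} {1..r} \<and> (\<forall>z\<in>{1..r}. p' (\<sigma> z) = p z) \<and>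
         (\<forall>a\<in>{1..r}. \<forall>b\<in>{1..r}. F' (\<sigma> a) (\<sigma> b) = F a b))"
proof -
  have model: "wsbm_model r p F" "wsbm_model r' p' F'"
    using assms(1,2) by (simp_all add: wsbm_assumptions_def)
  then have pos: "\<forall>z\<in>{1..r}. p z > 0" "\<forall>z\<in>{1..r'}. p' z > 0"
    by (simp_all add: wsbm_model_def)
  obtain Q where indep: "lin_indep_on {1..r} (Fq r p F Q)" "lin_indep_on {1..r'} (Fq r' p' F' Q)"
    using Fq_lin_indep_common_order[OF assms(1,2)] .
  note moments = star_moments_eq_if_joint_cdf_eq[OF model assms(3), where Q = Q]
  obtain \<sigma> where \<sigma>: "bij_betw \<sigma> {1..r} {1..r'}"
    "\<forall>z\<in>{1..r}. Fq r' p' F' Q (\<sigma> z) = Fq r p F Q z \<and> p' (\<sigma> z) = p z"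
  proof (rule mixture_identified_by_moments[OF finite_atLeastAtMost finite_atLeastAtMost indep pos, THEN exE])
    show "(\<Sum>s\<in>{1..r}. p s * (Fq r p F Q s x * Fq r p F Q s y))
        = (\<Sum>s\<in>{1..r'}. p' s * (Fq r' p' F' Q s x * Fq r' p' F' Q s y))" for x y
      using moments[where m = 2 and X = "\<lambda>j. if j = 0 then x else y"] by (simp add: numeral_2_eq_2 mult_ac)
    show "(\<Sum>s\<in>{1..r}. p s * (Fq r p F Q s x * Fq r p F Q s y * Fq r p F Q s w))
        = (\<Sum>s\<in>{1..r'}. p' s * (Fq r' p' F' Q s x * Fq r' p' F' Q s y * Fq r' p' F' Q s w))" for x y w
      using moments[where m = 3 and X = "\<lambda>j. if j = 0 then x else if j = 1 then y else w"]
      by (simp add: numeral_3_eq_3 mult_ac)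
  qed blast
  have "r = r'"
    using bij_betw_same_card[OF \<sigma>(1)] by simp
  with \<sigma> edge_distributions_identified[OF model assms(3) indep(1) \<sigma>] show ?thesis
    by auto
qed

end
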